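(* Let $D\in\mathcal{R}$. Then $\widetilde L^-(D)=\widetilde N^-(D)$.
   Context: Let $n\ge 1$ and $\Phi^+=\{(i,j)\in\mathbb{Z}^2:1\le j<i\le n\}$, with rows $\mathcal{R}_k=\{(k,s)\in\Phi^+\}$ and columns $\mathcal{C}_k=\{(r,k)\in\Phi^+\}$. A rook placement is a subset $D\subseteq\Phi^+$ with $|D\cap\mathcal{R}_k|\le1$ and $|D\cap\mathcal{C}_k|\le1$ for all $k$; $\mathcal{R}$ is the set of rook placements. For $D\in\mathcal{R}$, $R_D$ is the $n\times n$ integer matrix with $(R_D)_{i,j}=\#\{(a,b)\in D:a\ge i,\ b\le j\}$ for $i>j$ and $0$ otherwise; $D\le D'$ means $R_D\le R_{D'}$ entrywise. Order on $\Phi^+$: $(a,b)\le(c,d)$ iff $a\le c$ and $b\ge d$; $\widetilde M(D)$ is the set of minimal elements of $D$ for this order. Define $\widetilde N^-(D)=\{D\setminus\{(i,j)\}:(i,j)\in\widetilde M(D)\}$ and $\widetilde L^-(D)=\{T\in\mathcal{R}: T<D,\ |T|<|D|$, and every $S\in\mathcal{R}$ with $T\le S<D$ and $|S|<|D|$ equals $T\}$. *)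

theory Defs
  imports Main
begin

definition Phi :: "nat \<Rightarrow> (nat \<times> nat) set" where
  "Phi n = {(i, j). 1 \<le> j \<and> j < i \<and> i \<le> n}"

definition row :: "nat \<Rightarrow> nat \<Rightarrow> (nat \<times> nat) set" where
  "row n k = {p \<in> Phi n. fst p = k}"

definition col :: "nat \<Rightarrow> nat \<Rightarrow> (nat \<times> nat) set" where
  "col n k = {p \<in> Phi n. snd p = k}"

definition rook :: "nat \<Rightarrow> (nat \<times> nat) set \<Rightarrow> bool" where
  "rook n D \<longleftrightarrow> D \<subseteq> Phi n \<and>
     (\<forall>k. card (D \<inter> row n k) \<le> 1 \<and> card (D \<inter> col n k) \<le> 1)"

definition rmat :: "(nat \<times> nat) set \<Rightarrow> nat \<Rightarrow> nat \<Rightarrow> nat" where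
  "rmat D i j = (if i > j then card {(a, b) \<in> D. a \<ge> i \<and> b \<le> j} else 0)"

definition rle :: "nat \<Rightarrow> (nat \<times> nat) set \<Rightarrow> (nat \<times> nat) set \<Rightarrow> bool" where
  "rle n D D' \<longleftrightarrow> (\<forall>i\<in>{1..n}. \<forall>j\<in>{1..n}. rmat D i j \<le> rmat D' i j)"

definition rless :: "nat \<Rightarrow> (nat \<times> nat) set \<Rightarrow> (nat \<times> nat) set \<Rightarrow> bool" where
  "rless n D D' \<longleftrightarrow> rle n D D' \<and> D \<noteq> D'"

definition ple :: "nat \<times> nat \<Rightarrow> nat \<times> nat \<Rightarrow> bool" where
  "ple p q \<longleftrightarrow> fst p \<le> fst q \<and> snd p \<ge> snd q"

definition Mt :: "(nat \<times> nat) set \<Rightarrow> (nat \<times> nat) set" where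
  "Mt D = {p \<in> D. \<forall>q\<in>D. ple q p \<longrightarrow> q = p}"

definition Nt :: "(nat \<times> nat) set \<Rightarrow> (nat \<times> nat) set set" where
  "Nt D = {D - {p} | p. p \<in> Mt D}"

definition Lt :: "nat \<Rightarrow> (nat \<times> nat) set \<Rightarrow> (nat \<times> nat) set set" where
  "Lt n D = {T. rook n T \<and> rless n T D \<and> card T < card D \<and>
     (\<forall>S. rook n S \<and> rle n T S \<and> rless n S D \<and> card S < card D \<longrightarrow> S = T)}"

end

theory Submission
  imports Defs
begin

text \<open>The entry \<open>(i, j)\<close> of \<open>R_X\<close> counts the rooks of \<open>X\<close> in the up-set of \<open>(i, j)\<close>
  (its \<open>corner\<close>), so \<open>T \<le> D\<close> compares rook counts corner by corner. Let \<open>T \<le> D\<close> with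
  \<open>|T| < |D|\<close>. If \<open>T \<le> D - {p}\<close> failed for every minimal \<open>p\<close> of \<open>D\<close>, each minimal \<open>p\<close>
  would lie in a corner containing equally many rooks of \<open>T\<close> and of \<open>D\<close>. Corners meet in
  corners, so inclusion-exclusion along the staircase they form shows that their union
  contains at most as many rooks of \<open>D\<close> as of \<open>T\<close>; but the union contains all of \<open>D\<close>.
  Hence every such \<open>T\<close> lies below some \<open>D - {p}\<close> with \<open>p\<close> minimal. These placements are
  pairwise incomparable, and the order is antisymmetric because \<open>X\<close> is recovered from
  \<open>R_X\<close> by second differences, so they are exactly the maximal ones.\<close>

definition corner :: "nat \<times> nat \<Rightarrow> (nat \<times> nat) set" where
  "corner t = {q. ple t q}"

lemma ple_trans: "ple p q \<Longrightarrow> ple q r \<Longrightarrow> ple p r"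
  unfolding ple_def by auto

lemma ple_antisym: "ple p q \<Longrightarrow> ple q p \<Longrightarrow> p = q"
  unfolding ple_def by (auto simp: prod_eq_iff)

lemma corner_upclosed: "q \<in> corner t \<Longrightarrow> ple q r \<Longrightarrow> r \<in> corner t"
  unfolding corner_def using ple_trans by blast

lemma corner_Int:
  "corner s \<inter> corner t = corner (max (fst s) (fst t), min (snd s) (snd t))"
  unfolding corner_def ple_def by auto

lemma UN_corner_same_row:
  assumes "finite J" "J \<noteq> {}"
  shows "(\<Union>j\<in>J. corner (i, j)) = corner (i, Max J)"
proof
  show "(\<Union>j\<in>J. corner (i, j)) \<subseteq> corner (i, Max J)"
    using assms by (auto simp: corner_def ple_def intro: le_trans)
  show "corner (i, Max J) \<subseteq> (\<Union>j\<in>J. corner (i, j))"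
    using Max_in[OF assms] by blast
qed

lemma rmat_eq_card_corner: "j < i \<Longrightarrow> rmat X i j = card (X \<inter> corner (i, j))"
  unfolding rmat_def corner_def ple_def by (auto intro!: arg_cong[where f = card])

lemma rle_iff_card_corner:
  "rle n X Y \<longleftrightarrow> (\<forall>t\<in>Phi n. card (X \<inter> corner t) \<le> card (Y \<inter> corner t))"
  unfolding rle_def
proof (intro iffI ballI)
  fix t assume H: "\<forall>i\<in>{1..n}. \<forall>j\<in>{1..n}. rmat X i j \<le> rmat Y i j" and "t \<in> Phi n"
  then obtain i j where t: "t = (i, j)" "1 \<le> j" "j < i" "i \<le> n"
    unfolding Phi_def by auto
  with H have "rmat X i j \<le> rmat Y i j" by simp
  with t show "card (X \<inter> corner t) \<le> card (Y \<inter> corner t)"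
    by (simp add: rmat_eq_card_corner)
next
  fix i j assume H: "\<forall>t\<in>Phi n. card (X \<inter> corner t) \<le> card (Y \<inter> corner t)"
    and ij: "i \<in> {1..n}" "j \<in> {1..n}"
  show "rmat X i j \<le> rmat Y i j"
  proof (cases "j < i")
    case True
    with ij have "(i, j) \<in> Phi n" by (simp add: Phi_def)
    with H True show ?thesis by (simp add: rmat_eq_card_corner)
  qed (simp add: rmat_def)
qed

lemma rle_trans: "rle n X Y \<Longrightarrow> rle n Y Z \<Longrightarrow> rle n X Z"
  unfolding rle_def using order_trans by blast

lemma finite_Phi: "finite (Phi n)"
proof -
  have "Phi n \<subseteq> {..n} \<times> {..n}"
    unfolding Phi_def by auto
  then show ?thesis
    by (rule finite_subset) auto
qed

lemma rook_finite: "rook n X \<Longrightarrow> finite X"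
  unfolding rook_def using finite_Phi finite_subset by blast

lemma rook_Diff:
  assumes "rook n D"
  shows "rook n (D - {p})"
proof -
  have "card ((D - {p}) \<inter> A) \<le> card (D \<inter> A)" for A
    using rook_finite[OF assms] by (intro card_mono) auto
  with assms show ?thesis
    unfolding rook_def by (meson Diff_subset order_trans)
qed

lemma rle_Diff: "finite D \<Longrightarrow> rle n (D - {p}) D"
  unfolding rle_iff_card_corner by (auto intro: card_mono)

lemma exists_Mt_ple:
  assumes "finite D" "d \<in> D"
  shows "\<exists>p\<in>Mt D. ple p d"
proof -
  let ?R = "\<lambda>x y. ple x y \<and> x \<noteq> y"
  have "asymp_on D ?R"
    unfolding asymp_on_def using ple_antisym by blast
  moreover have "transp_on D ?R"
    unfolding transp_on_def using ple_antisym ple_trans by blast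
  moreover have "\<exists>x\<in>D. ple x d"
    using assms(2) unfolding ple_def by auto
  ultimately have "\<exists>p\<in>D. ple p d \<and> (\<forall>q\<in>D. ?R q p \<longrightarrow> \<not> ple q d)"
    by (rule Finite_Set.bex_min_element_with_property[OF assms(1)])
  then obtain p where p: "p \<in> D" "ple p d" "\<forall>q\<in>D. ?R q p \<longrightarrow> \<not> ple q d"
    by blast
  have "p \<in> Mt D"
    unfolding Mt_def using p ple_trans by blast
  with p show ?thesis by blast
qed

lemma card_Int_UN_corner_le:
  assumes "finite T" "finite D" "finite F" "F \<subseteq> Phi n"
    and tight: "\<And>t. t \<in> F \<Longrightarrow> card (T \<inter> corner t) = card (D \<inter> corner t)"
    and below: "\<And>t. t \<in> Phi n \<Longrightarrow> card (T \<inter> corner t) \<le> card (D \<inter> corner t)"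
  shows "card (D \<inter> \<Union>(corner ` F)) \<le> card (T \<inter> \<Union>(corner ` F))"
  using assms(3,4) tight
  \<comment> \<open>adding corners by increasing row, each new corner meets the previous union in one corner\<close>
proof (induction F rule: finite_ranking_induct[where f = fst])
  case empty
  then show ?case by simp
next
  case (insert x S)
  have x: "x \<in> Phi n" "card (T \<inter> corner x) = card (D \<inter> corner x)"
    using insert.prems by auto
  have IH: "card (D \<inter> \<Union>(corner ` S)) \<le> card (T \<inter> \<Union>(corner ` S))"
    using insert.IH insert.prems by auto
  show ?case
  proof (cases "S = {}")
    case True
    with x show ?thesis by simp
  next
    case False
    define j where "j = Max ((\<lambda>s. min (snd x) (snd s)) ` S)"
    have "corner x \<inter> \<Union>(corner ` S) = (\<Union>s\<in>S. corner x \<inter> corner s)"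
      by blast
    also have "\<dots> = (\<Union>s\<in>S. corner (fst x, min (snd x) (snd s)))"
      using insert.hyps(2) by (intro SUP_cong) (simp_all add: corner_Int max_absorb1)
    also have "\<dots> = corner (fst x, j)"
      unfolding j_def using UN_corner_same_row[of "(\<lambda>s. min (snd x) (snd s)) ` S" "fst x"]
        insert.hyps(1) False by simp
    finally have overlap: "corner x \<inter> \<Union>(corner ` S) = corner (fst x, j)" .
    have "j \<in> (\<lambda>s. min (snd x) (snd s)) ` S"
      unfolding j_def using insert.hyps(1) False by (intro Max_in) auto
    then obtain s where "s \<in> S" "j = min (snd x) (snd s)"
      by blast
    with x(1) insert.prems(1) have "(fst x, j) \<in> Phi n"
      by (auto simp: Phi_def)
    then have corner_below: "card (T \<inter> corner (fst x, j)) \<le> card (D \<inter> corner (fst x, j))"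
      by (rule below)
    have split: "card (X \<inter> \<Union>(corner ` insert x S)) + card (X \<inter> corner (fst x, j))
        = card (X \<inter> corner x) + card (X \<inter> \<Union>(corner ` S))" if "finite X" for X
      using card_Un_Int[of "X \<inter> corner x" "X \<inter> \<Union>(corner ` S)"] that overlap
      by (simp add: Int_Un_distrib Int_assoc Int_left_commute)
    show ?thesis
      using split[OF assms(1)] split[OF assms(2)] x(2) IH corner_below by linarith
  qed
qed

lemma tight_corner_if_not_rle_Diff:
  assumes "finite D" "rle n T D" "\<not> rle n T (D - {p})"
  obtains t where "t \<in> Phi n" "p \<in> corner t"
    "card (T \<inter> corner t) = card (D \<inter> corner t)"
proof -
  obtain t where t: "t \<in> Phi n" "card ((D - {p}) \<inter> corner t) < card (T \<inter> corner t)"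
    using assms(3) unfolding rle_iff_card_corner by (auto simp: not_le)
  have "card (T \<inter> corner t) \<le> card (D \<inter> corner t)"
    using assms(2) t(1) unfolding rle_iff_card_corner by blast
  moreover have "(D - {p}) \<inter> corner t = D \<inter> corner t - {p}"
    by blast
  ultimately have "p \<in> corner t" "card (T \<inter> corner t) = card (D \<inter> corner t)"
    using t(2) card_Diff_singleton_if[of "D \<inter> corner t" p] by (auto split: if_splits)
  with t(1) that show ?thesis by blast
qed

lemma exists_Mt_rle_Diff:
  assumes "finite T" "finite D" "rle n T D" "card T < card D"
  shows "\<exists>p\<in>Mt D. rle n T (D - {p})"
proof (rule ccontr)
  assume "\<not> ?thesis"
  then have "\<forall>p\<in>Mt D. \<exists>t. t \<in> Phi n \<and> p \<in> corner t \<and>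
      card (T \<inter> corner t) = card (D \<inter> corner t)"
    using tight_corner_if_not_rle_Diff[OF assms(2,3)] by metis
  then obtain f where f: "\<forall>p\<in>Mt D. f p \<in> Phi n \<and> p \<in> corner (f p) \<and>
      card (T \<inter> corner (f p)) = card (D \<inter> corner (f p))"
    by metis
  let ?U = "\<Union>(corner ` f ` Mt D)"
  have "D \<subseteq> ?U"
  proof
    fix d assume "d \<in> D"
    then obtain p where "p \<in> Mt D" "ple p d"
      using exists_Mt_ple[OF assms(2)] by blast
    with f show "d \<in> ?U"
      using corner_upclosed by blast
  qed
  have "finite (Mt D)"
    using assms(2) unfolding Mt_def by simp
  then have "card (D \<inter> ?U) \<le> card (T \<inter> ?U)"
    using f assms(3) unfolding rle_iff_card_corner
    by (intro card_Int_UN_corner_le[OF assms(1,2)]) auto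
  also have "\<dots> \<le> card T"
    using assms(1) by (simp add: card_mono)
  finally show False
    using \<open>D \<subseteq> ?U\<close> assms(4) by (simp add: Int_absorb2)
qed

lemma card_corner_second_difference:
  assumes "1 \<le> b" "finite Z"
  shows "card (Z \<inter> corner (a, b)) + card (Z \<inter> corner (a + 1, b - 1)) =
    (if (a, b) \<in> Z then 1 else 0) + card (Z \<inter> corner (a + 1, b)) + card (Z \<inter> corner (a, b - 1))"
proof -
  let ?A = "corner (a + 1, b)" and ?B = "corner (a, b - 1)"
  have "corner (a, b) = insert (a, b) (?A \<union> ?B)" "(a, b) \<notin> ?A \<union> ?B"
    using assms(1) by (auto simp: corner_def ple_def)
  then have "card (Z \<inter> corner (a, b)) = (if (a, b) \<in> Z then 1 else 0) + card (Z \<inter> (?A \<union> ?B))"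
    using assms(2) by (simp add: Int_insert_right)
  moreover have "card (Z \<inter> ?A) + card (Z \<inter> ?B) = card (Z \<inter> (?A \<union> ?B)) + card (Z \<inter> corner (a + 1, b - 1))"
    using card_Un_Int[of "Z \<inter> ?A" "Z \<inter> ?B"] assms(2)
    by (simp add: Int_Un_distrib Int_assoc Int_left_commute corner_Int)
  ultimately show ?thesis
    by linarith
qed

lemma Phi_Int_corner_empty: "snd t < fst t \<Longrightarrow> t \<notin> Phi n \<Longrightarrow> Phi n \<inter> corner t = {}"
  unfolding Phi_def corner_def ple_def by auto

lemma rle_antisym:
  assumes "X \<subseteq> Phi n" "Y \<subseteq> Phi n" "rle n X Y" "rle n Y X"
  shows "X = Y"
proof -
  have agree: "card (X \<inter> corner t) = card (Y \<inter> corner t)" if "snd t < fst t" for t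
  proof (cases "t \<in> Phi n")
    case True
    with assms(3,4) show ?thesis
      unfolding rle_iff_card_corner by (meson antisym)
  next
    case False
    with that assms(1,2) have "X \<inter> corner t = {}" "Y \<inter> corner t = {}"
      using Phi_Int_corner_empty by blast+
    then show ?thesis by simp
  qed
  have "finite X" "finite Y"
    using assms(1,2) finite_Phi finite_subset by blast+
  show ?thesis
  proof (rule set_eqI)
    fix p
    show "p \<in> X \<longleftrightarrow> p \<in> Y"
    proof (cases "p \<in> Phi n")
      case True
      then obtain a b where p: "p = (a, b)" "1 \<le> b" "b < a"
        unfolding Phi_def by auto
      have "(if (a, b) \<in> X then 1 else 0) = (if (a, b) \<in> Y then 1 else (0::nat))"
        using card_corner_second_difference[OF p(2) \<open>finite X\<close>, of a]
          card_corner_second_difference[OF p(2) \<open>finite Y\<close>, of a]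
          agree[of "(a, b)"] agree[of "(a + 1, b - 1)"] agree[of "(a + 1, b)"] agree[of "(a, b - 1)"]
          p(2,3) by simp
      with p(1) show ?thesis
        by (auto split: if_splits)
    next
      case False
      with assms(1,2) show ?thesis by blast
    qed
  qed
qed

lemma Mt_eq_if_rle_Diff:
  assumes "finite D" "D \<subseteq> Phi n" "p \<in> Mt D" "q \<in> D" "rle n (D - {p}) (D - {q})"
  shows "p = q"
proof -
  have q: "q \<in> Phi n" "q \<in> D \<inter> corner q"
    using assms(2,4) unfolding corner_def ple_def by auto
  have "card ((D - {p}) \<inter> corner q) \<le> card ((D - {q}) \<inter> corner q)"
    using assms(5) q(1) unfolding rle_iff_card_corner by blast
  also have "\<dots> < card (D \<inter> corner q)"
  proof -
    have "(D - {q}) \<inter> corner q = D \<inter> corner q - {q}"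
      by blast
    moreover have "card (D \<inter> corner q - {q}) < card (D \<inter> corner q)"
      using q(2) assms(1) by (intro card_Diff1_less) auto
    ultimately show ?thesis
      by (simp only:)
  qed
  finally have "p \<in> corner q"
  proof (rule contrapos_pp)
    assume "p \<notin> corner q"
    then have "(D - {p}) \<inter> corner q = D \<inter> corner q"
      by blast
    then show "\<not> card ((D - {p}) \<inter> corner q) < card (D \<inter> corner q)"
      by simp
  qed
  with assms(3,4) show ?thesis
    unfolding Mt_def corner_def by auto
qed

lemma rook_Diff_Mt_below:
  assumes "rook n D" "p \<in> Mt D"
  shows "rook n (D - {p})" "rless n (D - {p}) D" "card (D - {p}) < card D"
proof -
  have "p \<in> D" "finite D"
    using assms rook_finite unfolding Mt_def by auto
  then show "card (D - {p}) < card D"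
    by (rule card_Diff1_less[rotated])
  then show "rless n (D - {p}) D"
    unfolding rless_def using rle_Diff[OF \<open>finite D\<close>] by auto
  show "rook n (D - {p})"
    using rook_Diff[OF assms(1)] .
qed

theorem lemma3p8:
  fixes n :: nat and D :: "(nat \<times> nat) set"
  assumes "n \<ge> 1" and "rook n D"
  shows "Lt n D = Nt D"
proof (intro equalityI subsetI)
  have D: "finite D" "D \<subseteq> Phi n"
    using rook_finite[OF assms(2)] assms(2) unfolding rook_def by blast+
  have below: "\<exists>p\<in>Mt D. rle n S (D - {p})" if "rook n S" "rless n S D" "card S < card D" for S
    using that D(1) rook_finite exists_Mt_rle_Diff unfolding rless_def by blast
  fix T
  show "T \<in> Nt D" if "T \<in> Lt n D"
  proof -
    have T: "rook n T" "rless n T D" "card T < card D"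
      and maximal: "\<And>S. rook n S \<Longrightarrow> rle n T S \<Longrightarrow> rless n S D \<Longrightarrow> card S < card D \<Longrightarrow> S = T"
      using that unfolding Lt_def by auto
    obtain p where "p \<in> Mt D" "rle n T (D - {p})"
      using below[OF T] by blast
    then have "D - {p} = T"
      using maximal rook_Diff_Mt_below[OF assms(2)] by blast
    with \<open>p \<in> Mt D\<close> show ?thesis
      unfolding Nt_def by blast
  qed
  show "T \<in> Lt n D" if T: "T \<in> Nt D"
  proof -
    obtain p where p: "p \<in> Mt D" "T = D - {p}"
      using T unfolding Nt_def by blast
    have "S = T" if S: "rook n S" "rle n T S" "rless n S D" "card S < card D" for S
    proof -
      obtain q where q: "q \<in> Mt D" "rle n S (D - {q})"
        using below[OF S(1,3,4)] by blast
      have "p = q"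
        using Mt_eq_if_rle_Diff[OF D p(1)] rle_trans[OF S(2) q(2)] q(1) p(2)
        unfolding Mt_def by blast
      have "S \<subseteq> Phi n" "T \<subseteq> Phi n"
        using S(1) D(2) p(2) unfolding rook_def by blast+
      then show ?thesis
        using rle_antisym S(2) q(2) p(2) \<open>p = q\<close> by blast
    qed
    with p rook_Diff_Mt_below[OF assms(2) p(1)] show ?thesis
      unfolding Lt_def by blast
  qed
qed

end
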